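(* Let $d\ge404$ and $k$ an integer with $d/2+1<k\le2d/3$. Then for every $x\in(1,2]$ such that $f(x)\le k/(2k-d)^2$, $$\frac{(x+1)f'(x)}{k}<\big(1+\eta(x)\big)f(x).$$
   Context: $f(x)=\binom dk^{-1}\sum_{i=0}^{d-k}\binom ki\binom{d-k}{i}x^{k-i}$ and $\eta(x)=\dfrac{2k-d}{d-k+\sqrt{(d-k)^2+d(2k-d)f(x)}}$. *)

theory Defs
  imports "HOL-Analysis.Analysis"
begin

definition f18 :: "nat \<Rightarrow> nat \<Rightarrow> real \<Rightarrow> real" where
  "f18 d k x = (\<Sum>i=0..d-k. real (k choose i) * real ((d-k) choose i) * x ^ (k-i)) / real (d choose k)"

definition eta18 :: "nat \<Rightarrow> nat \<Rightarrow> real \<Rightarrow> real" where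
  "eta18 d k x = (2 * real k - real d) /
     (real d - real k + sqrt ((real d - real k)^2 + real d * (2 * real k - real d) * f18 d k x))"

end

theory Submission
  imports Defs
begin

text \<open>
  Expand f at 1: \<open>f x = (\<Sum>j. a\<^sub>j (x - 1)^j)\<close> with
  \<open>a\<^sub>j = C(k,j) C(d-j,d-k) / C(d,k)\<close> (Vandermonde), and the coefficients satisfy
  \<open>(j+1)(d-j) a\<^sub>j\<^sub>+\<^sub>1 = (k-j)\<^sup>2 a\<^sub>j\<close>. Hence the \<open>j\<close>-th coefficient of
  \<open>(x+1) f' - k f\<close> is \<open>a\<^sub>j (k-j)(2k-d-j)/(d-j)\<close>, which is at most \<open>k(2k-d-1)a\<^sub>j/d\<close>
  for \<open>j \<ge> 1\<close> and equals \<open>k(2k-d)/d\<close> for \<open>j = 0\<close>; since \<open>x > 1\<close>, this gives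
  \<open>(x+1) f' - k f \<le> k((2k-d-1) f + 1)/d\<close>. With \<open>n = 2k-d\<close>, \<open>m = d-k\<close> and
  \<open>S = sqrt(m\<^sup>2 + d n f)\<close> one has \<open>\<eta> f = (S - m)/d\<close>, so it remains to show
  \<open>(n-1) f + 1 + m < S\<close>; squaring, this reduces to \<open>(n-1)\<^sup>2 f < 2m + 1\<close>, which follows
  from \<open>f \<le> k/n\<^sup>2\<close> and \<open>k \<le> 2m\<close>.
\<close>

lemma choose_mult_swap: "(k choose i) * ((k - i) choose j) = (k choose j) * ((k - j) choose i)"
proof (cases "i + j \<le> k")
  case True
  have "(k choose i) * ((k - i) choose j) = (k choose (i + j)) * ((i + j) choose i)"
    using choose_mult[of i "i + j" k] True by simp
  also have "((i + j) choose i) = ((i + j) choose j)"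
    using binomial_symmetric[of i "i + j"] by simp
  also have "(k choose (i + j)) * ((i + j) choose j) = (k choose j) * ((k - j) choose i)"
    using choose_mult[of j "i + j" k] True by simp
  finally show ?thesis .
next
  case False
  then have "k - i < j \<or> k < i" and "k - j < i \<or> k < j"
    by arith+
  then show ?thesis
    by (auto simp: binomial_eq_0)
qed

lemma sum_choose_choose_choose:
  "(\<Sum>i\<le>m. (k choose i) * (m choose i) * ((k - i) choose j)) = (k choose j) * ((k - j + m) choose m)"
proof -
  have "(\<Sum>i\<le>m. (k choose i) * (m choose i) * ((k - i) choose j))
      = (k choose j) * (\<Sum>i\<le>m. ((k - j) choose i) * (m choose (m - i)))"
    unfolding sum_distrib_left
  proof (rule sum.cong[OF refl])
    fix i assume "i \<in> {..m}"
    then have "m choose (m - i) = m choose i"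
      using binomial_symmetric[of i m] by simp
    then show "(k choose i) * (m choose i) * ((k - i) choose j)
        = (k choose j) * (((k - j) choose i) * (m choose (m - i)))"
      using choose_mult_swap[of k i j] by (simp add: ac_simps)
  qed
  also have "\<dots> = (k choose j) * ((k - j + m) choose m)"
    by (simp add: vandermonde)
  finally show ?thesis .
qed

lemma power_eq_sum_choose_power_diff_one:
  fixes x :: "'a :: comm_ring_1"
  assumes "n \<le> N"
  shows "x ^ n = (\<Sum>j\<le>N. of_nat (n choose j) * (x - 1) ^ j)"
proof -
  have "x ^ n = ((x - 1) + 1) ^ n" by simp
  also have "\<dots> = (\<Sum>j\<le>n. of_nat (n choose j) * (x - 1) ^ j)"
    by (subst binomial_ring) simp
  also have "\<dots> = (\<Sum>j\<le>N. of_nat (n choose j) * (x - 1) ^ j)"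
    using assms by (intro sum.mono_neutral_left) (auto simp: not_le binomial_eq_0)
  finally show ?thesis .
qed

definition f18_coeff :: "nat \<Rightarrow> nat \<Rightarrow> nat \<Rightarrow> real" where
  "f18_coeff d k j = real (k choose j) * real ((d - j) choose (d - k)) / real (d choose k)"

lemma f18_eq_sum_coeff:
  assumes "k \<le> d"
  shows "f18 d k x = (\<Sum>j\<le>k. f18_coeff d k j * (x - 1) ^ j)"
proof -
  let ?b = "\<lambda>i. real (k choose i) * real ((d - k) choose i)"
  have "(\<Sum>i\<le>d - k. ?b i * x ^ (k - i))
      = (\<Sum>i\<le>d - k. \<Sum>j\<le>k. ?b i * real ((k - i) choose j) * (x - 1) ^ j)"
    by (simp add: power_eq_sum_choose_power_diff_one[of "k - _" k] sum_distrib_left mult.assoc)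
  also have "\<dots> = (\<Sum>j\<le>k. real (\<Sum>i\<le>d - k. (k choose i) * ((d - k) choose i) * ((k - i) choose j))
                          * (x - 1) ^ j)"
    by (subst sum.swap) (simp add: sum_distrib_right)
  also have "\<dots> = (\<Sum>j\<le>k. real ((k choose j) * ((d - j) choose (d - k))) * (x - 1) ^ j)"
  proof (rule sum.cong[OF refl])
    fix j assume "j \<in> {..k}"
    then have "k - j + (d - k) = d - j" using assms by simp
    then show "real (\<Sum>i\<le>d - k. (k choose i) * ((d - k) choose i) * ((k - i) choose j)) * (x - 1) ^ j
        = real ((k choose j) * ((d - j) choose (d - k))) * (x - 1) ^ j"
      by (simp only: sum_choose_choose_choose)
  qed
  finally show ?thesis
    unfolding f18_def f18_coeff_def atLeast0AtMost by (simp add: sum_divide_distrib)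
qed

lemma deriv_f18:
  assumes "k \<le> d"
  shows "deriv (f18 d k) x = (\<Sum>j\<le>k. f18_coeff d k j * (real j * (x - 1) ^ (j - 1)))"
proof -
  have "f18 d k = (\<lambda>x. \<Sum>j\<le>k. f18_coeff d k j * (x - 1) ^ j)"
    using f18_eq_sum_coeff[OF assms] by (intro ext)
  moreover have "((\<lambda>x. \<Sum>j\<le>k. f18_coeff d k j * (x - 1) ^ j) has_real_derivative
      (\<Sum>j\<le>k. f18_coeff d k j * (real j * (x - 1) ^ (j - 1)))) (at x)"
    by (auto intro!: derivative_eq_intros sum.cong simp: mult_ac)
  ultimately show ?thesis
    by (simp add: DERIV_imp_deriv)
qed

lemma f18_coeff_nonneg: "f18_coeff d k j \<ge> 0"
  unfolding f18_coeff_def by simp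

lemma f18_coeff_0: "k \<le> d \<Longrightarrow> f18_coeff d k 0 = 1"
  unfolding f18_coeff_def by (simp add: binomial_symmetric[symmetric])

lemma f18_coeff_Suc_k: "f18_coeff d k (Suc k) = 0"
  unfolding f18_coeff_def by simp

lemma f18_coeff_Suc:
  assumes "j \<le> k" "k \<le> d"
  shows "real (Suc j) * f18_coeff d k (Suc j) * (real d - real j) = f18_coeff d k j * (real k - real j)^2"
proof -
  have "Suc j * (k choose Suc j) = (k - j) * (k choose j)"
    using binomial_absorption[of j k] binomial_absorb_comp[of k j] by simp
  then have top: "real (Suc j) * real (k choose Suc j) = (real k - real j) * real (k choose j)"
    using assms by (metis of_nat_diff of_nat_mult)
  have "(d - j) * ((d - Suc j) choose (d - k)) = (k - j) * ((d - j) choose (d - k))"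
    using binomial_absorb_comp[of "d - j" "d - k"] assms by (simp add: diff_diff_add)
  then have bot: "(real d - real j) * real ((d - Suc j) choose (d - k))
      = (real k - real j) * real ((d - j) choose (d - k))"
    using assms by (metis le_trans of_nat_diff of_nat_mult)
  show ?thesis
    unfolding f18_coeff_def
    using arg_cong2[OF top bot, of "\<lambda>a b. a * b / real (d choose k)"]
    by (simp add: power2_eq_square ac_simps)
qed

lemma f18_coeff_1:
  assumes "k < d"
  shows "f18_coeff d k 1 = real k ^ 2 / real d"
proof -
  have "f18_coeff d k 1 * real d = f18_coeff d k 0 * real k ^ 2"
    using f18_coeff_Suc[of 0 k d] assms by simp
  then show ?thesis
    using f18_coeff_0[of k d] assms by (simp add: field_simps)
qed

definition f18_comb_coeff :: "nat \<Rightarrow> nat \<Rightarrow> nat \<Rightarrow> real" where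
  "f18_comb_coeff d k j = (real j - real k) * f18_coeff d k j + 2 * real (Suc j) * f18_coeff d k (Suc j)"

lemma sum_f18_comb_coeff:
  fixes y :: real
  shows "(y + 2) * (\<Sum>j\<le>k. f18_coeff d k j * (real j * y ^ (j - 1))) - real k * (\<Sum>j\<le>k. f18_coeff d k j * y ^ j)
    = (\<Sum>j\<le>k. f18_comb_coeff d k j * y ^ j)"
proof -
  let ?a = "f18_coeff d k"
  have shift: "(\<Sum>j\<le>k. 2 * real j * ?a j * y ^ (j - 1)) = (\<Sum>j\<le>k. 2 * real (Suc j) * ?a (Suc j) * y ^ j)"
    using sum.atMost_Suc_shift[of "\<lambda>j. 2 * real j * ?a j * y ^ (j - 1)" k]
    by (simp add: f18_coeff_Suc_k)
  have "(y + 2) * (\<Sum>j\<le>k. ?a j * (real j * y ^ (j - 1)))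
      = (\<Sum>j\<le>k. real j * ?a j * y ^ j) + (\<Sum>j\<le>k. 2 * real j * ?a j * y ^ (j - 1))"
    unfolding sum_distrib_left sum.distrib[symmetric]
    by (rule sum.cong[OF refl]) (auto simp: algebra_simps power_eq_if)
  then show ?thesis
    unfolding shift f18_comb_coeff_def
    by (simp add: sum_distrib_left sum.distrib[symmetric] sum_subtractf[symmetric] algebra_simps)
qed

lemma f18_comb_coeff_mult:
  assumes "j \<le> k" "k \<le> d"
  shows "f18_comb_coeff d k j * (real d - real j)
    = f18_coeff d k j * (real k - real j) * (2 * real k - real d - real j)"
  using f18_coeff_Suc[OF assms] unfolding f18_comb_coeff_def
  by (simp add: algebra_simps power2_eq_square)

lemma f18_comb_coeff_0:
  assumes "k < d"
  shows "f18_comb_coeff d k 0 = real k * (2 * real k - real d) / real d"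
  using f18_coeff_0[of k d] f18_coeff_1[of k d] assms unfolding f18_comb_coeff_def
  by (simp add: field_simps power2_eq_square)

lemma diff_mult_diff_le:
  fixes D K J N :: real
  assumes "1 \<le> J" "J \<le> K" "K \<le> D" "1 \<le> N"
  shows "D * (K - J) * (N - J) \<le> K * (N - 1) * (D - J)"
proof (cases "J \<le> N")
  case True
  have "K * J \<le> D * J"
    using assms by (intro mult_right_mono) auto
  then have "D * (K - J) \<le> K * (D - J)"
    by (simp add: algebra_simps)
  moreover have "N - J \<le> N - 1"
    using assms by simp
  ultimately have "D * (K - J) * (N - J) \<le> K * (D - J) * (N - 1)"
    using True assms by (simp add: mult_mono)
  then show ?thesis by (simp add: ac_simps)
next
  case False
  then have "D * (K - J) * (N - J) \<le> 0"
    using assms by (intro mult_nonneg_nonpos) auto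
  also have "0 \<le> K * (N - 1) * (D - J)" using assms by simp
  finally show ?thesis .
qed

lemma f18_comb_coeff_le:
  assumes "1 \<le> j" "j \<le> k" "k < d" "1 \<le> 2 * real k - real d"
  shows "f18_comb_coeff d k j \<le> real k / real d * (2 * real k - real d - 1) * f18_coeff d k j"
proof -
  let ?a = "f18_coeff d k j" and ?n = "2 * real k - real d"
  have "real d * (f18_comb_coeff d k j * (real d - real j)) = ?a * (real d * (real k - real j) * (?n - real j))"
    using f18_comb_coeff_mult[of j k d] assms by simp
  also have "\<dots> \<le> ?a * (real k * (?n - 1) * (real d - real j))"
    using diff_mult_diff_le[of "real j" "real k" "real d" ?n] assms
    by (intro mult_left_mono f18_coeff_nonneg) auto
  finally have "(real d * f18_comb_coeff d k j) * (real d - real j) \<le> (real k * (?n - 1) * ?a) * (real d - real j)"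
    by (simp add: ac_simps)
  then have "real d * f18_comb_coeff d k j \<le> real k * (?n - 1) * ?a"
    using assms by (simp add: mult_le_cancel_right)
  then show ?thesis
    using assms by (simp add: field_simps)
qed

lemma f18_deriv_comb_le:
  assumes "k < d" "1 \<le> 2 * real k - real d" "1 \<le> x"
  shows "(x + 1) * deriv (f18 d k) x - real k * f18 d k x
    \<le> real k / real d * ((2 * real k - real d - 1) * f18 d k x + 1)"
proof -
  define y where "y = x - 1"
  let ?a = "f18_coeff d k" and ?c = "real k / real d * (2 * real k - real d - 1)"
  have y: "0 \<le> y" "x + 1 = y + 2" using assms unfolding y_def by auto
  have split: "(\<Sum>j\<le>k. g j) = g 0 + (\<Sum>j=1..k. g j)" for g :: "nat \<Rightarrow> real"
    by (simp add: atMost_atLeast0 sum.atLeast_Suc_atMost)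
  have f: "f18 d k x = (\<Sum>j\<le>k. ?a j * y ^ j)"
    using assms f18_eq_sum_coeff unfolding y_def by simp
  have "(x + 1) * deriv (f18 d k) x - real k * f18 d k x = (\<Sum>j\<le>k. f18_comb_coeff d k j * y ^ j)"
    using assms deriv_f18[of k d x] unfolding f y(2) sum_f18_comb_coeff[symmetric] y_def by simp
  also have "\<dots> = f18_comb_coeff d k 0 + (\<Sum>j=1..k. f18_comb_coeff d k j * y ^ j)"
    by (simp only: split) simp
  also have "\<dots> \<le> (?c + real k / real d) + (\<Sum>j=1..k. ?c * (?a j * y ^ j))"
  proof (intro add_mono sum_mono)
    show "f18_comb_coeff d k 0 \<le> ?c + real k / real d"
      using assms by (simp add: f18_comb_coeff_0 field_simps)
  next
    fix j assume "j \<in> {1..k}"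
    then have "f18_comb_coeff d k j * y ^ j \<le> ?c * ?a j * y ^ j"
      using assms y by (intro mult_right_mono f18_comb_coeff_le) auto
    then show "f18_comb_coeff d k j * y ^ j \<le> ?c * (?a j * y ^ j)"
      by (simp add: mult.assoc)
  qed
  also have "\<dots> = ?c * (\<Sum>j\<le>k. ?a j * y ^ j) + real k / real d"
    using assms by (simp add: split distrib_left sum_distrib_left f18_coeff_0)
  also have "\<dots> = real k / real d * ((2 * real k - real d - 1) * f18 d k x + 1)"
    by (simp add: f distrib_left mult.assoc)
  finally show ?thesis .
qed

lemma f18_gt_one:
  assumes "1 \<le> k" "k < d" "1 < x"
  shows "1 < f18 d k x"
proof -
  have "1 + f18_coeff d k 1 * (x - 1) = (\<Sum>j\<in>{0, 1}. f18_coeff d k j * (x - 1) ^ j)"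
    using assms by (simp add: f18_coeff_0)
  also have "\<dots> \<le> (\<Sum>j\<le>k. f18_coeff d k j * (x - 1) ^ j)"
    using assms by (intro sum_mono2) (auto intro!: mult_nonneg_nonneg f18_coeff_nonneg)
  moreover have "0 < f18_coeff d k 1 * (x - 1)"
    using assms f18_coeff_1[of k d] by simp
  ultimately show ?thesis
    using assms by (simp add: f18_eq_sum_coeff)
qed

lemma sqrt_bound:
  fixes D K f :: real
  defines "n \<equiv> 2 * K - D" and "m \<equiv> D - K"
  assumes n: "1 \<le> n" and K: "K \<le> 2 * m" and f: "1 < f" "f \<le> K / n ^ 2"
  shows "(n - 1) * f + 1 + m < sqrt (m ^ 2 + D * n * f)"
proof (rule real_less_rsqrt)
  have "0 < K"
    using n K unfolding n_def m_def by simp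
  have "(n - 1) ^ 2 < n ^ 2"
    using n by (simp add: power2_eq_square algebra_simps)
  then have "(n - 1) ^ 2 / n ^ 2 < 1"
    using n by simp
  have "(n - 1) ^ 2 * f \<le> (n - 1) ^ 2 * (K / n ^ 2)"
    using f by (intro mult_left_mono) auto
  also have "\<dots> = K * ((n - 1) ^ 2 / n ^ 2)"
    by simp
  also have "\<dots> < K"
    using mult_strict_left_mono[OF \<open>(n - 1) ^ 2 / n ^ 2 < 1\<close> \<open>0 < K\<close>] by simp
  finally have "(n - 1) ^ 2 * f < 2 * m + 1"
    using K by simp
  then have "(f - 1) * ((n - 1) ^ 2 * f - 1 - 2 * m) < 0"
    using f by (intro mult_pos_neg) auto
  moreover have "((n - 1) * f + 1 + m) ^ 2 - (m ^ 2 + D * n * f) = (f - 1) * ((n - 1) ^ 2 * f - 1 - 2 * m)"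
    unfolding n_def m_def by (simp add: power2_eq_square algebra_simps)
  ultimately show "((n - 1) * f + 1 + m) ^ 2 < m ^ 2 + D * n * f"
    by simp
qed

lemma mult_div_add_sqrt_eq:
  fixes D n m f :: real
  assumes "0 < m" "0 < D" "0 \<le> n * f"
  shows "n / (m + sqrt (m ^ 2 + D * n * f)) * f = (sqrt (m ^ 2 + D * n * f) - m) / D"
proof -
  define S where "S = sqrt (m ^ 2 + D * n * f)"
  have rad: "0 \<le> m ^ 2 + D * n * f"
    using assms by (simp add: mult.assoc)
  then have S: "(S - m) * (S + m) = D * n * f"
    unfolding S_def by (simp add: algebra_simps power2_eq_square)
  have "0 < m + S"
    unfolding S_def using assms rad by (intro add_pos_nonneg) auto
  have "n / (m + S) * f = (S - m) * (S + m) / (D * (m + S))"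
    using assms unfolding S by simp
  also have "\<dots> = (S - m) / D"
    using \<open>0 < m + S\<close> by (simp add: ac_simps)
  finally show ?thesis
    unfolding S_def .
qed

theorem lemma18:
  fixes d k :: nat and x :: real
  assumes "d \<ge> 404"
    and "real d / 2 + 1 < real k" and "real k \<le> 2 * real d / 3"
    and "1 < x" and "x \<le> 2"
    and "f18 d k x \<le> real k / (2 * real k - real d)^2"
  shows "(x + 1) * deriv (f18 d k) x / real k < (1 + eta18 d k x) * f18 d k x"
proof -
  define n where "n = 2 * real k - real d"
  define m where "m = real d - real k"
  define f where "f = f18 d k x"
  define S where "S = sqrt (m ^ 2 + real d * n * f)"
  have kd: "1 \<le> k" "k < d" and n: "1 \<le> n" "real k \<le> 2 * m"
    using assms unfolding n_def m_def by auto
  have f: "1 < f" "f \<le> real k / n ^ 2"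
    using assms f18_gt_one[OF kd] unfolding f_def n_def by auto
  have "(x + 1) * deriv (f18 d k) x - real k * f \<le> real k / real d * ((n - 1) * f + 1)"
    using f18_deriv_comb_le[OF kd(2)] n assms unfolding f_def n_def by simp
  then have "(x + 1) * deriv (f18 d k) x / real k \<le> f + ((n - 1) * f + 1) / real d"
    using kd by (simp add: field_simps)
  also have "\<dots> < f + (S - m) / real d"
    using sqrt_bound[of "real k" "real d" f] n f kd unfolding S_def n_def m_def
    by (simp add: divide_strict_right_mono)
  also have "(S - m) / real d = eta18 d k x * f"
    using mult_div_add_sqrt_eq[of m "real d" n f] n f kd
    unfolding eta18_def S_def m_def n_def f_def by simp
  finally show ?thesis
    unfolding f_def by (simp add: algebra_simps)
qed

end
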